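(* The discriminant $\Delta(a_0,\ldots,a_4)$ lies in $\mathbb{Q}[a_0,\ldots,a_4]$; it is a symmetric polynomial, homogeneous of degree $32$, and absolutely irreducible.
   Context: For indeterminates $a_0,\ldots,a_4$ define $$\Delta(a_0,\ldots,a_4):=\prod_{i_1,i_2,i_3,i_4\in\{0,1\}}\Big(\sqrt{a_1a_2a_3a_4}+(-1)^{i_1}\sqrt{a_0a_2a_3a_4}+(-1)^{i_2}\sqrt{a_0a_1a_3a_4}+(-1)^{i_3}\sqrt{a_0a_1a_2a_4}+(-1)^{i_4}\sqrt{a_0a_1a_2a_3}\Big),$$ a priori an element of $\mathbb{Q}[\sqrt{a_0},\ldots,\sqrt{a_4}]$; equivalently $\Delta=a_0^8\cdots a_4^8\prod_{i_1,\ldots,i_4\in\{0,1\}}\big(\tfrac{1}{\sqrt{a_0}}+(-1)^{i_1}\tfrac{1}{\sqrt{a_1}}+\cdots+(-1)^{i_4}\tfrac{1}{\sqrt{a_4}}\big)$. It is called the discriminant of the cubic surface $S^{(a_0,\ldots,a_4)}\subset\mathbf{P}^4$ given by $a_0X_0^3+\cdots+a_4X_4^3=0$, $X_0+\cdots+X_4=0$ (pentahedral normal form). *)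

theory Defs
  imports Complex_Main "HOL-Computational_Algebra.Polynomial" "HOL-Combinatorics.Permutations"
begin

text \<open>Polynomials in the five indeterminates a_0,...,a_4 over a ring R are modelled by the
  iterated univariate polynomial ring R[a_0][a_1][a_2][a_3][a_4], i.e. the type
  R poly poly poly poly poly (innermost variable a_0, outermost variable a_4).\<close>

type_synonym 'a mpoly5 = "'a poly poly poly poly poly"

definition coeff5 :: "'a::zero mpoly5 \<Rightarrow> (nat \<Rightarrow> nat) \<Rightarrow> 'a" where
  "coeff5 p k = coeff (coeff (coeff (coeff (coeff p (k 4)) (k 3)) (k 2)) (k 1)) (k 0)"

definition eval5 :: "'a::comm_semiring_1 mpoly5 \<Rightarrow> (nat \<Rightarrow> 'a) \<Rightarrow> 'a" where
  "eval5 p x = poly (poly (poly (poly (poly p [:[:[:[:x 4:]:]:]:]) [:[:[:x 3:]:]:]) [:[:x 2:]:]) [:x 1:]) (x 0)"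

definition map5 :: "('a::zero \<Rightarrow> 'b::zero) \<Rightarrow> 'a mpoly5 \<Rightarrow> 'b mpoly5" where
  "map5 f p = map_poly (map_poly (map_poly (map_poly (map_poly f))) ) p"

text \<open>The defining product of the discriminant, evaluated at square roots s_i of a_i:
  the summand m j is the product of all s_i with i different from j, i.e. sqrt of
  the product of the a_i with i different from j.\<close>
definition Delta_sqrt :: "(nat \<Rightarrow> complex) \<Rightarrow> complex" where
  "Delta_sqrt s =
    (let m = (\<lambda>j. \<Prod>i\<in>{0..4::nat} - {j}. s i) in
     \<Prod>i1\<in>{0..1::nat}. \<Prod>i2\<in>{0..1::nat}. \<Prod>i3\<in>{0..1::nat}. \<Prod>i4\<in>{0..1::nat}.
       m 0 + (-1)^i1 * m 1 + (-1)^i2 * m 2 + (-1)^i3 * m 3 + (-1)^i4 * m 4)"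

end

theory Submission
  imports Defs "HOL-Computational_Algebra.Polynomial_Factorial" "HOL-Computational_Algebra.Field_as_Ring"
begin

text \<open>
  Write \<open>M\<^sub>j = \<Prod>\<^bsub>i\<noteq>j\<^esub> a\<^sub>i\<close>. The square roots in \<open>\<Delta>\<close> enter only through
  \<open>y\<^sub>j = \<Prod>\<^bsub>i\<noteq>j\<^esub> \<surd>a\<^sub>i\<close>, with \<open>y\<^sub>j\<^sup>2 = M\<^sub>j\<close>, and the product of the 16 forms
  \<open>y\<^sub>0 \<plusminus> y\<^sub>1 \<plusminus> \<dots> \<plusminus> y\<^sub>4\<close> is even in every \<open>y\<^sub>j\<close>; explicitly it is a quartic
  \<open>N\<close> in the elementary symmetric functions of the \<open>y\<^sub>j\<^sup>2\<close>. Hence \<open>\<Delta> = N(M\<^sub>0, \<dots>, M\<^sub>4)\<close>,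
  which is symmetric (permuting the \<open>a\<^sub>i\<close> permutes the \<open>M\<^sub>j\<close>) and homogeneous of degree
  \<open>8 \<cdot> 4 = 32\<close>.

  For irreducibility, pull a factorisation \<open>\<Delta> = F G\<close> back along \<open>a\<^sub>i \<mapsto> x\<^sub>i\<^sup>2\<close>. The
  pullback of \<open>\<Delta>\<close> is the product of the 16 linear forms in the monomials
  \<open>\<Prod>\<^bsub>i\<noteq>j\<^esub> x\<^sub>i\<close>; these are pairwise non-associated primes (each is linear in \<open>x\<^sub>4\<close>
  with coprime coefficients), so the pullback of \<open>F\<close> is associated to a subproduct. That
  pullback is invariant under every sign change \<open>x\<^sub>j \<mapsto> -x\<^sub>j\<close>, and the sign changes
  \<open>j = 1, \<dots>, 4\<close> permute the 16 forms (up to sign) transitively, so the subproduct is empty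
  or everything, i.e. \<open>F\<close> or \<open>G\<close> is a unit.
\<close>

section \<open>Ring homomorphisms\<close>

locale comm_ring_hom =
  fixes f :: "'a::comm_ring_1 \<Rightarrow> 'b::comm_ring_1"
  assumes hom_one: "f 1 = 1"
    and hom_add: "f (a + b) = f a + f b"
    and hom_mult: "f (a * b) = f a * f b"
begin

lemma hom_zero: "f 0 = 0"
  using hom_add[of 0 0] by simp

lemma hom_uminus: "f (- a) = - f a"
  using hom_add[of a "- a"] by (simp add: hom_zero eq_neg_iff_add_eq_0 add.commute)

lemma hom_diff: "f (a - b) = f a - f b"
  using hom_add[of a "- b"] by (simp add: hom_uminus)

lemma hom_sum: "f (sum g A) = (\<Sum>x\<in>A. f (g x))"
  by (induction A rule: infinite_finite_induct) (simp_all add: hom_zero hom_add)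

lemma hom_prod: "f (prod g A) = (\<Prod>x\<in>A. f (g x))"
  by (induction A rule: infinite_finite_induct) (simp_all add: hom_one hom_mult)

lemma hom_power: "f (a ^ n) = f a ^ n"
  by (induction n) (simp_all add: hom_one hom_mult)

lemma hom_of_nat: "f (of_nat n) = of_nat n"
  by (induction n) (simp_all add: hom_zero hom_one hom_add)

lemma hom_numeral: "f (numeral n) = numeral n"
  using hom_of_nat[of "numeral n"] by simp

lemma hom_dvd: "a dvd b \<Longrightarrow> f a dvd f b"
  by (auto simp: hom_mult elim!: dvdE)

lemmas hom_simps = hom_zero hom_one hom_add hom_mult hom_uminus hom_diff hom_sum hom_prod
  hom_power hom_of_nat hom_numeral

end

lemma comm_ring_hom_comp: "comm_ring_hom f \<Longrightarrow> comm_ring_hom g \<Longrightarrow> comm_ring_hom (\<lambda>x. f (g x))"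
  unfolding comm_ring_hom_def by simp

lemma comm_ring_hom_of_rat: "comm_ring_hom (of_rat :: rat \<Rightarrow> 'a::field_char_0)"
  by unfold_locales (simp_all add: of_rat_add of_rat_mult)

lemma comm_ring_hom_poly: "comm_ring_hom (\<lambda>p. poly p y)"
  by unfold_locales simp_all

lemma comm_ring_hom_map_poly:
  assumes "comm_ring_hom f"
  shows "comm_ring_hom (map_poly f)"
proof -
  interpret comm_ring_hom f by fact
  show ?thesis
  proof
    show "map_poly f 1 = 1" by (simp add: hom_one)
    show "map_poly f (p + q) = map_poly f p + map_poly f q" for p q
      by (rule poly_eqI) (simp add: coeff_map_poly hom_zero hom_add)
    show "map_poly f (p * q) = map_poly f p * map_poly f q" for p q
      by (rule poly_eqI) (simp add: coeff_map_poly coeff_mult hom_zero hom_sum hom_mult)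
  qed
qed

lemma poly_map_poly_hom:
  assumes "comm_ring_hom h"
  shows "poly (map_poly h p) (h y) = h (poly p y)"
proof (induction p)
  case (pCons a p)
  then show ?case
    using comm_ring_hom.hom_simps[OF assms] by (simp add: map_poly_pCons)
qed (simp add: comm_ring_hom.hom_zero[OF assms])

section \<open>Polynomials in five variables\<close>

definition const5 :: "'a::zero \<Rightarrow> 'a mpoly5" where
  "const5 c = [:[:[:[:[:c:]:]:]:]:]"

definition monom5 :: "'a::zero \<Rightarrow> (nat \<Rightarrow> nat) \<Rightarrow> 'a mpoly5" where
  "monom5 c k = monom (monom (monom (monom (monom c (k 0)) (k 1)) (k 2)) (k 3)) (k 4)"

definition var5 :: "nat \<Rightarrow> 'a::comm_semiring_1 mpoly5" where
  "var5 i = monom5 1 (\<lambda>j. if j = i then 1 else 0)"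

definition power5 :: "(nat \<Rightarrow> 'a::comm_semiring_1) \<Rightarrow> (nat \<Rightarrow> nat) \<Rightarrow> 'a" where
  "power5 x k = (\<Prod>i<5. x i ^ k i)"

definition trunc5 :: "(nat \<Rightarrow> nat) \<Rightarrow> nat \<Rightarrow> nat" where
  "trunc5 k i = (if i < 5 then k i else 0)"

text \<open>Exponent vectors are functions \<open>nat \<Rightarrow> nat\<close> of which only the first five values matter;
  the support is normalised to vectors vanishing from index 5 on.\<close>

definition supp5 :: "'a::zero mpoly5 \<Rightarrow> (nat \<Rightarrow> nat) set" where
  "supp5 p = {k. coeff5 p k \<noteq> 0 \<and> (\<forall>i\<ge>5. k i = 0)}"

lemma sum_lessThan_5: "(\<Sum>i<5. f i) = f 0 + f 1 + f 2 + f 3 + f (4::nat)"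
  by (simp add: numeral_eq_Suc add.assoc)

lemma prod_lessThan_5: "(\<Prod>i<5. f i) = f 0 * f 1 * f 2 * f 3 * f (4::nat)"
  by (simp add: numeral_eq_Suc mult.assoc)

lemma comm_ring_hom_eval5: "comm_ring_hom (\<lambda>p. eval5 p x)"
  unfolding eval5_def by (intro comm_ring_hom_comp[OF comm_ring_hom_poly] comm_ring_hom_poly)

lemmas eval5_simps [simp] = comm_ring_hom.hom_simps[OF comm_ring_hom_eval5]

lemma comm_ring_hom_map5: "comm_ring_hom f \<Longrightarrow> comm_ring_hom (map5 f)"
  unfolding map5_def[abs_def] by (intro comm_ring_hom_map_poly)

lemma eval5_map5:
  assumes h: "comm_ring_hom h"
  shows "eval5 (map5 h p) (\<lambda>i. h (x i)) = h (eval5 p x)"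
proof -
  note h1 = comm_ring_hom_map_poly[OF h]
  note h2 = comm_ring_hom_map_poly[OF h1]
  note h3 = comm_ring_hom_map_poly[OF h2]
  note h4 = comm_ring_hom_map_poly[OF h3]
  show ?thesis
    unfolding eval5_def map5_def
    by (simp add: poly_map_poly_hom[OF h, symmetric] poly_map_poly_hom[OF h1, symmetric]
        poly_map_poly_hom[OF h2, symmetric] poly_map_poly_hom[OF h3, symmetric]
        poly_map_poly_hom[OF h4, symmetric] map_poly_pCons comm_ring_hom.hom_zero[OF h])
qed

lemma eval5_cong: "(\<And>i. i < 5 \<Longrightarrow> x i = y i) \<Longrightarrow> eval5 p x = eval5 p y"
  by (simp add: eval5_def)

lemma comm_ring_hom_const5: "comm_ring_hom const5"
  by unfold_locales (simp_all add: const5_def pCons_one)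

lemma eval5_const5 [simp]: "eval5 (const5 c) x = c"
  by (simp add: eval5_def const5_def)

lemma eval5_monom5 [simp]: "eval5 (monom5 c k) x = c * power5 x k"
  by (simp add: eval5_def monom5_def power5_def prod_lessThan_5 poly_monom mult_ac)

lemma eval5_var5 [simp]: "i < 5 \<Longrightarrow> eval5 (var5 i) x = x i"
  by (auto simp: var5_def power5_def prod_lessThan_5 less_Suc_eq numeral_eq_Suc)

lemma map_poly_ident: "map_poly (\<lambda>x. x) = (\<lambda>x. x)"
  by (rule ext) simp

lemma map5_monom5: "f 0 = 0 \<Longrightarrow> map5 f (monom5 c k) = monom5 (f c) k"
  by (simp add: map5_def monom5_def map_poly_monom)

lemma map5_var5: "comm_ring_hom f \<Longrightarrow> map5 f (var5 i) = var5 i"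
  by (simp add: var5_def map5_monom5 comm_ring_hom.hom_zero comm_ring_hom.hom_one)

lemma coeff5_add [simp]: "coeff5 (p + q) k = coeff5 p k + coeff5 q k"
  by (simp add: coeff5_def)

lemma coeff5_0 [simp]: "coeff5 0 k = 0"
  by (simp add: coeff5_def)

lemma coeff5_sum: "coeff5 (sum f A) k = (\<Sum>a\<in>A. coeff5 (f a) k)"
  by (induction A rule: infinite_finite_induct) auto

lemma coeff5_trunc5 [simp]: "coeff5 p (trunc5 k) = coeff5 p k"
  by (simp add: coeff5_def trunc5_def)

lemma coeff5_const5_mult: "coeff5 (const5 c * p) k = c * coeff5 p k"
  by (simp add: coeff5_def const5_def)

lemma coeff5_monom5:
  assumes "\<forall>i\<ge>5. k i = 0"
  shows "coeff5 (monom5 c k) j = (if k = trunc5 j then c else 0)"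
proof -
  have "(j 0 = k 0 \<and> j 1 = k 1 \<and> j 2 = k 2 \<and> j 3 = k 3 \<and> j 4 = k 4) \<longleftrightarrow> k = trunc5 j"
    using assms
    by (auto simp: trunc5_def fun_eq_iff less_Suc_eq numeral_eq_Suc not_less)
  then show ?thesis
    by (auto simp: coeff5_def monom5_def)
qed

lemma coeff5_sum_monom5:
  assumes "finite K" "\<And>k. k \<in> K \<Longrightarrow> \<forall>i\<ge>5. k i = 0"
  shows "coeff5 (\<Sum>k\<in>K. monom5 (c k) k) j = (if trunc5 j \<in> K then c (trunc5 j) else 0)"
proof -
  have "coeff5 (\<Sum>k\<in>K. monom5 (c k) k) j = (\<Sum>k\<in>K. if k = trunc5 j then c k else 0)"
    unfolding coeff5_sum using assms(2) by (intro sum.cong) (simp_all add: coeff5_monom5)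
  then show ?thesis
    using assms(1) by (simp add: sum.delta')
qed

lemma mpoly5_eqI:
  assumes "\<And>k. coeff5 p k = coeff5 q k"
  shows "p = q"
proof -
  have "coeff (coeff (coeff (coeff (coeff p n4) n3) n2) n1) n0 =
      coeff (coeff (coeff (coeff (coeff q n4) n3) n2) n1) n0" for n0 n1 n2 n3 n4
    using assms[of "\<lambda>i. if i = 0 then n0 else if i = 1 then n1 else if i = 2 then n2
      else if i = 3 then n3 else n4"]
    by (simp add: coeff5_def)
  then show ?thesis by (intro poly_eqI) blast
qed

lemma finite_supp5: "finite (supp5 p)"
proof -
  let ?S = "\<lambda>q. {n. coeff q n \<noteq> 0}"
  have fin: "finite (?S q)" for q :: "'b::zero poly"
    by (rule finite_subset[of _ "{..degree q}"]) (auto intro: le_degree)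
  let ?T = "SIGMA n4:?S p. SIGMA n3:?S (coeff p n4). SIGMA n2:?S (coeff (coeff p n4) n3).
      SIGMA n1:?S (coeff (coeff (coeff p n4) n3) n2). ?S (coeff (coeff (coeff (coeff p n4) n3) n2) n1)"
  let ?vec = "\<lambda>(n4, n3, n2, n1, n0) i. if i = 0 then n0 else if i = 1 then n1 else if i = 2 then n2
      else if i = 3 then n3 else if i = 4 then n4 else 0::nat"
  have "supp5 p \<subseteq> ?vec ` ?T"
  proof
    fix k assume k: "k \<in> supp5 p"
    then have "k = ?vec (k 4, k 3, k 2, k 1, k 0)"
      by (auto simp: supp5_def fun_eq_iff)
    moreover have "(k 4, k 3, k 2, k 1, k 0) \<in> ?T"
      using k by (auto simp: supp5_def coeff5_def)
    ultimately show "k \<in> ?vec ` ?T" by blast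
  qed
  moreover have "finite ?T" by (intro finite_SigmaI fin)
  ultimately show ?thesis by (meson finite_subset finite_imageI)
qed

lemma trunc5_in_supp5_iff: "trunc5 j \<in> supp5 p \<longleftrightarrow> coeff5 p j \<noteq> 0"
  by (simp add: supp5_def trunc5_def)

lemma mpoly5_expansion: "p = (\<Sum>k\<in>supp5 p. monom5 (coeff5 p k) k)"
proof (rule mpoly5_eqI)
  fix j
  have "coeff5 (\<Sum>k\<in>supp5 p. monom5 (coeff5 p k) k) j =
      (if trunc5 j \<in> supp5 p then coeff5 p (trunc5 j) else 0)"
    by (rule coeff5_sum_monom5[OF finite_supp5]) (simp add: supp5_def)
  then show "coeff5 p j = coeff5 (\<Sum>k\<in>supp5 p. monom5 (coeff5 p k) k) j"
    by (simp add: trunc5_in_supp5_iff)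
qed

lemma eval5_expansion: "eval5 p x = (\<Sum>k\<in>supp5 p. coeff5 p k * power5 x k)"
  for p :: "'a::comm_ring_1 mpoly5"
  by (subst mpoly5_expansion) simp

lemma poly_eq_if_eq_on_infinite:
  fixes p q :: "'a::idom poly"
  assumes "infinite S" "\<And>y. y \<in> S \<Longrightarrow> poly p y = poly q y"
  shows "p = q"
proof (rule ccontr)
  assume "p \<noteq> q"
  then have "finite {y. poly (p - q) y = 0}" by (intro poly_roots_finite) simp
  moreover have "S \<subseteq> {y. poly (p - q) y = 0}" using assms(2) by auto
  ultimately show False using assms(1) finite_subset by blast
qed

text \<open>The inner variables enter the nested evaluation as constant polynomials, so injectivity
  of evaluation follows one variable at a time.\<close>

lemma eval5_inject:
  fixes p q :: "'a::{idom,ring_char_0} mpoly5"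
  assumes "\<And>x. eval5 p x = eval5 q x"
  shows "p = q"
proof -
  have inf: "infinite (range f)" if "inj f" for f :: "'a \<Rightarrow> 'b"
    using that by (auto dest!: finite_imageD simp: infinite_UNIV_char_0)
  have "poly (poly (poly (poly (poly p [:[:[:[:x4:]:]:]:]) [:[:[:x3:]:]:]) [:[:x2:]:]) [:x1:]) x0 =
      poly (poly (poly (poly (poly q [:[:[:[:x4:]:]:]:]) [:[:[:x3:]:]:]) [:[:x2:]:]) [:x1:]) x0"
    for x0 x1 x2 x3 x4
    using assms[of "\<lambda>i. if i = 0 then x0 else if i = 1 then x1 else if i = 2 then x2
        else if i = 3 then x3 else x4"]
    by (simp add: eval5_def)
  then have "poly (poly (poly (poly p [:[:[:[:x4:]:]:]:]) [:[:[:x3:]:]:]) [:[:x2:]:]) [:x1:] =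
      poly (poly (poly (poly q [:[:[:[:x4:]:]:]:]) [:[:[:x3:]:]:]) [:[:x2:]:]) [:x1:]" for x1 x2 x3 x4
    by (intro poly_eq_if_eq_on_infinite[of UNIV]) (simp_all add: infinite_UNIV_char_0)
  then have "poly (poly (poly p [:[:[:[:x4:]:]:]:]) [:[:[:x3:]:]:]) [:[:x2:]:] =
      poly (poly (poly q [:[:[:[:x4:]:]:]:]) [:[:[:x3:]:]:]) [:[:x2:]:]" for x2 x3 x4
    by (intro poly_eq_if_eq_on_infinite[OF inf[of "\<lambda>c. [:c:]"]]) (auto simp: inj_def)
  then have "poly (poly p [:[:[:[:x4:]:]:]:]) [:[:[:x3:]:]:] =
      poly (poly q [:[:[:[:x4:]:]:]:]) [:[:[:x3:]:]:]" for x3 x4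
    by (intro poly_eq_if_eq_on_infinite[OF inf[of "\<lambda>c. [:[:c:]:]"]]) (auto simp: inj_def)
  then have "poly p [:[:[:[:x4:]:]:]:] = poly q [:[:[:[:x4:]:]:]:]" for x4
    by (intro poly_eq_if_eq_on_infinite[OF inf[of "\<lambda>c. [:[:[:c:]:]:]"]]) (auto simp: inj_def)
  then show "p = q"
    by (intro poly_eq_if_eq_on_infinite[OF inf[of "\<lambda>c. [:[:[:[:c:]:]:]:]"]]) (auto simp: inj_def)
qed

lemma is_unit_mpoly5_iff:
  fixes p :: "'a::idom mpoly5"
  shows "p dvd 1 \<longleftrightarrow> (\<exists>c. c dvd 1 \<and> p = const5 c)"
proof
  assume "p dvd 1"
  then show "\<exists>c. c dvd 1 \<and> p = const5 c"
    by (auto simp: const5_def is_unit_poly_iff)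
next
  assume "\<exists>c. c dvd 1 \<and> p = const5 c"
  then show "p dvd 1"
    using comm_ring_hom.hom_dvd[OF comm_ring_hom_const5, of _ 1]
    by (auto simp: comm_ring_hom.hom_one[OF comm_ring_hom_const5])
qed

definition subst5 :: "'a::comm_ring_1 mpoly5 \<Rightarrow> (nat \<Rightarrow> 'a mpoly5) \<Rightarrow> 'a mpoly5" where
  "subst5 p q = eval5 (map5 const5 p) q"

lemma comm_ring_hom_subst5: "comm_ring_hom (\<lambda>p. subst5 p q)"
  unfolding subst5_def
  by (rule comm_ring_hom_comp[OF comm_ring_hom_eval5 comm_ring_hom_map5[OF comm_ring_hom_const5]])

lemma eval5_subst5 [simp]: "eval5 (subst5 p q) x = eval5 p (\<lambda>i. eval5 (q i) x)"
proof -
  have "map5 (\<lambda>r. eval5 r x) (map5 const5 p) = p"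
    by (simp add: map5_def map_poly_map_poly comp_def map_poly_ident
        comm_ring_hom.hom_zero[OF comm_ring_hom_const5])
  then show ?thesis
    using eval5_map5[OF comm_ring_hom_eval5[of x], of "map5 const5 p" q] by (simp add: subst5_def)
qed

definition perm5 :: "(nat \<Rightarrow> nat) \<Rightarrow> 'a::comm_ring_1 mpoly5 \<Rightarrow> 'a mpoly5" where
  "perm5 \<sigma> p = (\<Sum>k\<in>supp5 p. monom5 (coeff5 p k) (k \<circ> inv \<sigma>))"

definition scale5 :: "'a::comm_ring_1 \<Rightarrow> 'a mpoly5 \<Rightarrow> 'a mpoly5" where
  "scale5 c p = (\<Sum>k\<in>supp5 p. monom5 (c ^ (\<Sum>i<5. k i) * coeff5 p k) k)"

lemma power5_permute:
  assumes "\<sigma> permutes {..<5}"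
  shows "power5 (x \<circ> \<sigma>) k = power5 x (k \<circ> inv \<sigma>)"
proof -
  have "power5 x (k \<circ> inv \<sigma>) = (\<Prod>i<5. x (\<sigma> i) ^ k (inv \<sigma> (\<sigma> i)))"
    unfolding power5_def by (subst prod.permute[OF assms]) (simp add: comp_def)
  also have "\<dots> = power5 (x \<circ> \<sigma>) k"
    using permutes_inverses(2)[OF assms] by (simp add: power5_def)
  finally show ?thesis ..
qed

lemma eval5_perm5:
  assumes "\<sigma> permutes {..<5}"
  shows "eval5 (perm5 \<sigma> p) x = eval5 p (x \<circ> \<sigma>)"
  by (simp add: perm5_def eval5_expansion[of p "x \<circ> \<sigma>"] power5_permute[OF assms])

lemma coeff5_perm5:
  assumes \<sigma>: "\<sigma> permutes {..<5}"
  shows "coeff5 (perm5 \<sigma> p) j = coeff5 p (j \<circ> \<sigma>)"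
proof -
  let ?\<tau> = "inv \<sigma>" and ?K = "supp5 p"
  have comp_inv: "m \<circ> ?\<tau> \<circ> \<sigma> = m" "m \<circ> \<sigma> \<circ> ?\<tau> = m" for m :: "nat \<Rightarrow> nat"
    using permutes_inv_o[OF \<sigma>] by (simp_all add: comp_assoc)
  have fixed: "\<sigma> i = i" "?\<tau> i = i" if "i \<ge> 5" for i
    using permutes_not_in[OF \<sigma>] permutes_not_in[OF permutes_inv[OF \<sigma>]] that by auto
  have image_iff': "m \<in> (\<lambda>k. k \<circ> ?\<tau>) ` ?K \<longleftrightarrow> m \<circ> \<sigma> \<in> ?K" for m
  proof
    assume "m \<in> (\<lambda>k. k \<circ> ?\<tau>) ` ?K"
    then show "m \<circ> \<sigma> \<in> ?K"
      by (auto simp: comp_inv(1))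
  next
    assume "m \<circ> \<sigma> \<in> ?K"
    then show "m \<in> (\<lambda>k. k \<circ> ?\<tau>) ` ?K"
      using comp_inv(2)[of m] by (metis image_eqI)
  qed
  have "inj_on (\<lambda>k. k \<circ> ?\<tau>) ?K"
    by (rule inj_onI) (metis comp_inv(1))
  then have "perm5 \<sigma> p = (\<Sum>m\<in>(\<lambda>k. k \<circ> ?\<tau>) ` ?K. monom5 (coeff5 p (m \<circ> \<sigma>)) m)"
    by (simp add: perm5_def sum.reindex comp_inv(1))
  moreover have "coeff5 (\<Sum>m\<in>(\<lambda>k. k \<circ> ?\<tau>) ` ?K. monom5 (coeff5 p (m \<circ> \<sigma>)) m) j =
      (if trunc5 j \<in> (\<lambda>k. k \<circ> ?\<tau>) ` ?K then coeff5 p (trunc5 j \<circ> \<sigma>) else 0)"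
  proof (rule coeff5_sum_monom5)
    show "finite ((\<lambda>k. k \<circ> ?\<tau>) ` ?K)"
      by (intro finite_imageI finite_supp5)
    show "\<forall>i\<ge>5. m i = 0" if "m \<in> (\<lambda>k. k \<circ> ?\<tau>) ` ?K" for m
    proof -
      from that obtain k where "k \<in> ?K" "m = k \<circ> ?\<tau>" by blast
      then show ?thesis using fixed(2) by (simp add: supp5_def)
    qed
  qed
  moreover have "trunc5 j \<circ> \<sigma> = trunc5 (j \<circ> \<sigma>)"
    using permutes_in_image[OF \<sigma>] by (simp add: trunc5_def fun_eq_iff)
  ultimately show ?thesis
    by (simp add: image_iff' trunc5_in_supp5_iff)
qed

lemma power5_scale: "power5 (\<lambda>i. c * x i) k = c ^ (\<Sum>i<5. k i) * power5 x k"
  by (simp add: power5_def power_mult_distrib prod.distrib power_sum)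

lemma eval5_scale5: "eval5 (scale5 c p) x = eval5 p (\<lambda>i. c * x i)"
  unfolding eval5_expansion[of p "\<lambda>i. c * x i"] power5_scale
  by (simp add: scale5_def mult_ac)

lemma coeff5_scale5: "coeff5 (scale5 c p) k = c ^ (\<Sum>i<5. k i) * coeff5 p k"
proof -
  have "coeff5 (scale5 c p) k =
      (if trunc5 k \<in> supp5 p then c ^ (\<Sum>i<5. trunc5 k i) * coeff5 p (trunc5 k) else 0)"
    unfolding scale5_def by (rule coeff5_sum_monom5[OF finite_supp5]) (simp add: supp5_def)
  moreover have "(\<Sum>i<5. trunc5 k i) = (\<Sum>i<5. k i)"
    by (simp add: trunc5_def)
  ultimately show ?thesis
    by (simp add: trunc5_in_supp5_iff)
qed

lemma coeff5_permute_eq: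
  fixes p :: "'a::{idom,ring_char_0} mpoly5"
  assumes "\<sigma> permutes {..<5}" "\<And>x. eval5 p (x \<circ> \<sigma>) = eval5 p x"
  shows "coeff5 p (k \<circ> \<sigma>) = coeff5 p k"
proof -
  have "perm5 \<sigma> p = p"
    by (rule eval5_inject) (simp add: eval5_perm5 assms)
  then show ?thesis
    using coeff5_perm5[OF assms(1), of p k] by simp
qed

lemma coeff5_nonzero_imp_total_degree:
  fixes p :: "'a::{idom,ring_char_0} mpoly5"
  assumes "\<And>x. eval5 p (\<lambda>i. 2 * x i) = 2 ^ d * eval5 p x" and "coeff5 p k \<noteq> 0"
  shows "(\<Sum>i<5. k i) = d"
proof -
  have "scale5 2 p = const5 (2 ^ d) * p"
    by (rule eval5_inject) (simp add: eval5_scale5 assms(1))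
  then have "2 ^ (\<Sum>i<5. k i) * coeff5 p k = 2 ^ d * coeff5 p k"
    by (metis coeff5_scale5 coeff5_const5_mult)
  then have "of_nat (2 ^ (\<Sum>i<5. k i)) = (of_nat (2 ^ d) :: 'a)"
    using assms(2) by simp
  then show ?thesis
    by (simp only: of_nat_eq_iff) simp
qed

section \<open>The discriminant as a polynomial\<close>

definition esym1 :: "(nat \<Rightarrow> 'a::comm_ring_1) \<Rightarrow> 'a" where
  "esym1 v = v 0 + v 1 + v 2 + v 3 + v 4"

definition esym2 :: "(nat \<Rightarrow> 'a::comm_ring_1) \<Rightarrow> 'a" where
  "esym2 v = v 0 * v 1 + v 0 * v 2 + v 0 * v 3 + v 0 * v 4 + v 1 * v 2 + v 1 * v 3 + v 1 * v 4
    + v 2 * v 3 + v 2 * v 4 + v 3 * v 4"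

definition esym3 :: "(nat \<Rightarrow> 'a::comm_ring_1) \<Rightarrow> 'a" where
  "esym3 v = v 0 * v 1 * v 2 + v 0 * v 1 * v 3 + v 0 * v 1 * v 4 + v 0 * v 2 * v 3 + v 0 * v 2 * v 4
    + v 0 * v 3 * v 4 + v 1 * v 2 * v 3 + v 1 * v 2 * v 4 + v 1 * v 3 * v 4 + v 2 * v 3 * v 4"

definition esym4 :: "(nat \<Rightarrow> 'a::comm_ring_1) \<Rightarrow> 'a" where
  "esym4 v = v 0 * v 1 * v 2 * v 3 + v 0 * v 1 * v 2 * v 4 + v 0 * v 1 * v 3 * v 4
    + v 0 * v 2 * v 3 * v 4 + v 1 * v 2 * v 3 * v 4"

definition esym5 :: "(nat \<Rightarrow> 'a::comm_ring_1) \<Rightarrow> 'a" where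
  "esym5 v = v 0 * v 1 * v 2 * v 3 * v 4"

definition psum :: "nat \<Rightarrow> (nat \<Rightarrow> 'a::comm_ring_1) \<Rightarrow> 'a" where
  "psum m v = (\<Sum>i<5. v i ^ m)"

lemma newton_identities:
  fixes v :: "nat \<Rightarrow> 'a::idom"
  shows "esym1 v = psum 1 v"
    and "2 * esym2 v = esym1 v * psum 1 v - psum 2 v"
    and "3 * esym3 v = esym2 v * psum 1 v - esym1 v * psum 2 v + psum 3 v"
    and "4 * esym4 v = esym3 v * psum 1 v - esym2 v * psum 2 v + esym1 v * psum 3 v - psum 4 v"
    and "5 * esym5 v = esym4 v * psum 1 v - esym3 v * psum 2 v + esym2 v * psum 3 v
      - esym1 v * psum 4 v + psum 5 v"
  unfolding esym1_def esym2_def esym3_def esym4_def esym5_def psum_def sum_lessThan_5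
  by algebra+

lemma psum_permute: "\<sigma> permutes {..<5} \<Longrightarrow> psum m (v \<circ> \<sigma>) = psum m v"
  unfolding psum_def by (subst sum.permute[of \<sigma>]) (simp_all add: comp_def)

text \<open>Power sums are visibly symmetric, and in characteristic zero Newton's identities recover the
  elementary symmetric functions from them.\<close>

lemma esym_permute:
  fixes v :: "nat \<Rightarrow> 'a::{idom,ring_char_0}"
  assumes "\<sigma> permutes {..<5}"
  shows "esym1 (v \<circ> \<sigma>) = esym1 v" and "esym2 (v \<circ> \<sigma>) = esym2 v" and "esym3 (v \<circ> \<sigma>) = esym3 v"
    and "esym4 (v \<circ> \<sigma>) = esym4 v" and "esym5 (v \<circ> \<sigma>) = esym5 v"
proof -
  note newton = newton_identities[of v] newton_identities[of "v \<circ> \<sigma>"]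
  note psum = psum_permute[OF assms, of _ v]
  show e1: "esym1 (v \<circ> \<sigma>) = esym1 v"
    using newton psum by simp
  have "2 * esym2 (v \<circ> \<sigma>) = 2 * esym2 v"
    using newton psum e1 by simp
  then show e2: "esym2 (v \<circ> \<sigma>) = esym2 v" by simp
  have "3 * esym3 (v \<circ> \<sigma>) = 3 * esym3 v"
    using newton psum e1 e2 by simp
  then show e3: "esym3 (v \<circ> \<sigma>) = esym3 v" by simp
  have "4 * esym4 (v \<circ> \<sigma>) = 4 * esym4 v"
    using newton psum e1 e2 e3 by simp
  then show e4: "esym4 (v \<circ> \<sigma>) = esym4 v" by simp
  have "5 * esym5 (v \<circ> \<sigma>) = 5 * esym5 v"
    using newton psum e1 e2 e3 e4 by simp
  then show "esym5 (v \<circ> \<sigma>) = esym5 v" by simp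
qed

text \<open>The quartic \<open>N\<close>: the product of the 16 forms \<open>y\<^sub>0 \<plusminus> y\<^sub>1 \<plusminus> \<dots> \<plusminus> y\<^sub>4\<close>,
  expanded in the elementary symmetric functions of the \<open>y\<^sub>i\<^sup>2\<close>.\<close>

definition signed_norm_esym :: "'a::comm_ring_1 \<Rightarrow> 'a \<Rightarrow> 'a \<Rightarrow> 'a \<Rightarrow> 'a \<Rightarrow> 'a" where
  "signed_norm_esym e1 e2 e3 e4 e5 = (e1\<^sup>2 - 4 * e2) ^ 4 - 128 * e4 * (e1\<^sup>2 - 4 * e2)\<^sup>2
     + 4096 * e4\<^sup>2 - 2048 * e5 * (e1 ^ 3 - 4 * e1 * e2 + 8 * e3)"

definition signed_norm :: "(nat \<Rightarrow> 'a::comm_ring_1) \<Rightarrow> 'a" where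
  "signed_norm v = signed_norm_esym (esym1 v) (esym2 v) (esym3 v) (esym4 v) (esym5 v)"

lemma signed_norm_permute:
  fixes v :: "nat \<Rightarrow> 'a::{idom,ring_char_0}"
  shows "\<sigma> permutes {..<5} \<Longrightarrow> signed_norm (v \<circ> \<sigma>) = signed_norm v"
  by (simp add: signed_norm_def esym_permute)

lemma signed_norm_cong: "(\<And>i. i < 5 \<Longrightarrow> v i = w i) \<Longrightarrow> signed_norm v = signed_norm w"
  by (simp add: signed_norm_def esym1_def esym2_def esym3_def esym4_def esym5_def)

lemma signed_norm_scale:
  fixes v :: "nat \<Rightarrow> 'a::idom"
  shows "signed_norm (\<lambda>i. c * v i) = c ^ 8 * signed_norm v"
proof -
  have "esym1 (\<lambda>i. c * v i) = c * esym1 v" "esym2 (\<lambda>i. c * v i) = c ^ 2 * esym2 v"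
    "esym3 (\<lambda>i. c * v i) = c ^ 3 * esym3 v" "esym4 (\<lambda>i. c * v i) = c ^ 4 * esym4 v"
    "esym5 (\<lambda>i. c * v i) = c ^ 5 * esym5 v"
    unfolding esym1_def esym2_def esym3_def esym4_def esym5_def by algebra+
  moreover have "signed_norm_esym (c * e1) (c ^ 2 * e2) (c ^ 3 * e3) (c ^ 4 * e4) (c ^ 5 * e5) =
      c ^ 8 * signed_norm_esym e1 e2 e3 e4 e5" for e1 e2 e3 e4 e5 :: 'a
    unfolding signed_norm_esym_def by algebra
  ultimately show ?thesis
    by (simp add: signed_norm_def)
qed

lemma (in comm_ring_hom) hom_signed_norm: "f (signed_norm v) = signed_norm (\<lambda>i. f (v i))"
  by (simp add: signed_norm_def signed_norm_esym_def esym1_def esym2_def esym3_def esym4_def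
      esym5_def hom_simps)

text \<open>A sign vector \<open>(a, b, c, d)\<close> selects the signs of \<open>y\<^sub>1, \<dots>, y\<^sub>4\<close>; \<open>True\<close> means minus.\<close>

type_synonym signs = "bool \<times> bool \<times> bool \<times> bool"

definition sign_of :: "bool \<Rightarrow> 'a::comm_ring_1" where
  "sign_of b = (if b then - 1 else 1)"

lemma sign_of_simps [simp]: "sign_of True = - 1" "sign_of False = 1"
  by (simp_all add: sign_of_def)

lemma sign_of_Not [simp]: "sign_of (\<not> b) = - sign_of b"
  by (cases b) simp_all

lemma sign_of_nonzero [simp]: "sign_of b \<noteq> (0 :: 'a::{comm_ring_1,ring_char_0})"
  by (cases b) simp_all

lemma sign_of_inject: "sign_of a = (sign_of b :: 'a::{idom,ring_char_0}) \<longleftrightarrow> a = b"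
  by (cases a; cases b) simp_all

lemma is_unit_sign_of: "is_unit (sign_of b :: 'a::{comm_ring_1,algebraic_semidom})"
  by (rule dvdI[of _ _ "sign_of b"]) (cases b; simp)

lemma (in comm_ring_hom) hom_sign_of: "f (sign_of b) = sign_of b"
  by (cases b) (simp_all add: hom_simps)

definition signed_sum :: "signs \<Rightarrow> (nat \<Rightarrow> 'a::comm_ring_1) \<Rightarrow> 'a" where
  "signed_sum = (\<lambda>(a, b, c, d) y. y 0 + sign_of a * y 1 + sign_of b * y 2 + sign_of c * y 3
      + sign_of d * y 4)"

lemma (in comm_ring_hom) hom_signed_sum: "f (signed_sum e y) = signed_sum e (\<lambda>i. f (y i))"
  by (cases e) (simp add: signed_sum_def hom_simps hom_sign_of)

lemma signed_sum_cong: "(\<And>j. j \<le> 4 \<Longrightarrow> u j = w j) \<Longrightarrow> signed_sum e u = signed_sum e w"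
  by (cases e) (simp add: signed_sum_def)

lemma signed_sum_linear:
  "signed_sum e (\<lambda>j. c * u j + w j) = c * signed_sum e u + signed_sum e w"
  by (cases e) (simp add: signed_sum_def algebra_simps)

lemma prod_signs: "(\<Prod>e\<in>UNIV. f e) = (\<Prod>a\<in>UNIV. \<Prod>b\<in>UNIV. \<Prod>c\<in>UNIV. \<Prod>d\<in>UNIV. f (a, b, c, d))"
  for f :: "signs \<Rightarrow> 'a::comm_monoid_mult"
  by (simp add: prod.cartesian_product flip: UNIV_Times_UNIV)

lemma prod_signed_sum_eq_signed_norm:
  fixes y :: "nat \<Rightarrow> 'a::idom"
  shows "(\<Prod>e\<in>UNIV. signed_sum e y) = signed_norm (\<lambda>i. y i ^ 2)"
  unfolding prod_signs UNIV_bool signed_norm_def signed_norm_esym_def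
    esym1_def esym2_def esym3_def esym4_def esym5_def
  by (simp add: signed_sum_def) algebra

definition prod_except :: "(nat \<Rightarrow> 'a::comm_monoid_mult) \<Rightarrow> nat \<Rightarrow> 'a" where
  "prod_except x j = (\<Prod>i\<in>{0..4} - {j}. x i)"

lemma Delta_sqrt_eq_prod_signed_sum: "Delta_sqrt s = (\<Prod>e\<in>UNIV. signed_sum e (prod_except s))"
proof -
  have "{0..1::nat} = {0, 1}" by auto
  then show ?thesis
    unfolding Delta_sqrt_def prod_signs UNIV_bool prod_except_def Let_def
    by (simp add: signed_sum_def)
qed

lemma prod_except_power: "prod_except (\<lambda>i. x i ^ n) = (\<lambda>j. prod_except x j ^ n)"
  for x :: "nat \<Rightarrow> 'a::comm_semiring_1"
  by (simp add: fun_eq_iff prod_except_def prod_power_distrib)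

lemma prod_except_scale: "j < 5 \<Longrightarrow> prod_except (\<lambda>i. c * x i) j = c ^ 4 * prod_except x j"
  by (simp add: prod_except_def prod.distrib card_Diff_singleton)

lemma prod_except_permute:
  assumes "\<sigma> permutes {..<5}"
  shows "prod_except (x \<circ> \<sigma>) j = prod_except x (\<sigma> j)"
proof -
  have range: "{0..4::nat} = {..<5}" by auto
  have "\<sigma> ` ({..<5} - {j}) = {..<5} - {\<sigma> j}"
    using permutes_image[OF assms] permutes_inj[OF assms] by (simp add: image_set_diff)
  then have "prod_except x (\<sigma> j) = (\<Prod>i\<in>\<sigma> ` ({..<5} - {j}). x i)"
    by (simp add: prod_except_def range)
  also have "\<dots> = (\<Prod>i\<in>{..<5} - {j}. x (\<sigma> i))"
    using permutes_inj[OF assms] by (simp add: prod.reindex inj_on_subset)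
  finally show ?thesis
    by (simp add: prod_except_def range)
qed

lemma prod_except_point:
  assumes "i < 5"
  shows "prod_except (\<lambda>l. if l = i then 0 else 1) j = (if j = i then 1 else 0)"
  using assms by (auto simp: prod_except_def intro: prod_zero)

definition discriminant5 :: "'a::comm_ring_1 mpoly5" where
  "discriminant5 = signed_norm (prod_except var5)"

lemma eval5_prod_except_var5: "(\<lambda>j. eval5 (prod_except var5 j) x) = prod_except x"
  for x :: "nat \<Rightarrow> 'a::comm_ring_1"
  by (auto simp: prod_except_def fun_eq_iff intro!: prod.cong)

lemma eval5_discriminant5: "eval5 discriminant5 x = signed_norm (prod_except x)"
  by (simp add: discriminant5_def comm_ring_hom.hom_signed_norm[OF comm_ring_hom_eval5]
      eval5_prod_except_var5)

lemma map5_discriminant5: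
  assumes "comm_ring_hom f"
  shows "map5 f discriminant5 = discriminant5"
proof -
  have "map5 f (prod_except var5 j) = prod_except var5 j" for j
    by (simp add: prod_except_def comm_ring_hom.hom_prod[OF comm_ring_hom_map5[OF assms]]
        map5_var5[OF assms])
  then show ?thesis
    by (simp add: discriminant5_def comm_ring_hom.hom_signed_norm[OF comm_ring_hom_map5[OF assms]])
qed

lemma eval5_discriminant5_squares: "eval5 discriminant5 (\<lambda>i. s i ^ 2) = Delta_sqrt s"
  by (simp add: eval5_discriminant5 prod_except_power Delta_sqrt_eq_prod_signed_sum
      prod_signed_sum_eq_signed_norm)

lemma eval5_discriminant5_permute:
  fixes x :: "nat \<Rightarrow> 'a::{idom,ring_char_0}"
  assumes "\<sigma> permutes {..<5}"
  shows "eval5 discriminant5 (x \<circ> \<sigma>) = eval5 discriminant5 x"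
proof -
  have "prod_except (x \<circ> \<sigma>) = prod_except x \<circ> \<sigma>"
    by (intro ext) (simp only: comp_apply prod_except_permute[OF assms])
  then show ?thesis
    by (simp add: eval5_discriminant5 signed_norm_permute[OF assms])
qed

lemma eval5_discriminant5_scale:
  fixes x :: "nat \<Rightarrow> 'a::idom"
  shows "eval5 discriminant5 (\<lambda>i. c * x i) = c ^ 32 * eval5 discriminant5 x"
proof -
  have "signed_norm (prod_except (\<lambda>i. c * x i)) = signed_norm (\<lambda>j. c ^ 4 * prod_except x j)"
    by (rule signed_norm_cong) (simp add: prod_except_scale)
  then show ?thesis
    by (simp add: eval5_discriminant5 signed_norm_scale flip: power_mult)
qed

lemma eval5_discriminant5_ones: "eval5 discriminant5 (\<lambda>_. 1) = (- 1215 :: 'a::comm_ring_1)"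
  by (simp add: eval5_discriminant5 prod_except_def signed_norm_def signed_norm_esym_def
      esym1_def esym2_def esym3_def esym4_def esym5_def)

lemma discriminant5_nonzero: "(discriminant5 :: 'a::{comm_ring_1,ring_char_0} mpoly5) \<noteq> 0"
proof
  assume "discriminant5 = (0 :: 'a mpoly5)"
  then have "eval5 discriminant5 (\<lambda>_. 1) = (0 :: 'a)"
    by simp
  then show False
    using eval5_discriminant5_ones[where 'a = 'a] by simp
qed

lemma eval5_discriminant5_zeros: "eval5 discriminant5 (\<lambda>_. 0) = (0 :: 'a::comm_ring_1)"
proof -
  have "prod_except (\<lambda>_. 0 :: 'a) j = 0" for j
    unfolding prod_except_def by (rule prod_zero) (simp_all, presburger)
  then show ?thesis
    by (simp add: eval5_discriminant5 signed_norm_def signed_norm_esym_def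
        esym1_def esym2_def esym3_def esym4_def esym5_def)
qed

section \<open>Irreducibility\<close>

lemma prime_elem_dvd_prodE:
  fixes p :: "'a::comm_semiring_1"
  assumes "prime_elem p" "finite A" "p dvd prod f A"
  obtains a where "a \<in> A" "p dvd f a"
  using assms(2,3)
proof (induction A rule: finite_induct)
  case empty
  then show ?case using prime_elem_not_unit[OF assms(1)] by simp
next
  case (insert a A)
  then show ?case
    using prime_elem_dvd_multD[OF assms(1)] by (metis insertCI prod.insert)
qed

lemma dvd_prod_prime_elemsE:
  fixes p :: "'b \<Rightarrow> 'a::factorial_semiring_gcd"
  assumes "finite U" "\<And>a. a \<in> U \<Longrightarrow> prime_elem (p a)" "d dvd prod p U"
  obtains S where "S \<subseteq> U" "d dvd prod p S" "prod p S dvd d"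
proof -
  have "\<exists>S\<subseteq>U. d dvd prod p S \<and> prod p S dvd d"
    using assms
  proof (induction U arbitrary: d rule: finite_induct)
    case empty
    then show ?case by auto
  next
    case (insert a U)
    have pa: "prime_elem (p a)" using insert.prems by simp
    have dvd: "d dvd p a * prod p U" using insert by simp
    show ?case
    proof (cases "p a dvd d")
      case True
      then obtain d' where d': "d = p a * d'" by blast
      with dvd pa have "d' dvd prod p U" by auto
      then obtain S where S: "S \<subseteq> U" "d' dvd prod p S" "prod p S dvd d'"
        using insert by auto
      then have "prod p (insert a S) = p a * prod p S"
        using insert(1,2) finite_subset by (subst prod.insert) auto
      then show ?thesis
        using S d' by (intro exI[of _ "insert a S"]) (auto intro: mult_dvd_mono)
    next
      case False
      then have "coprime d (p a)"
        using prime_elem_imp_coprime[OF pa] by (simp add: coprime_commute)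
      then have "d dvd prod p U" using dvd coprime_dvd_mult_right_iff by blast
      then show ?thesis using insert by blast
    qed
  qed
  then show ?thesis using that by blast
qed

lemma prod_prime_elems_dvd_imp_subset:
  fixes p :: "'b \<Rightarrow> 'a::comm_semiring_1"
  assumes "finite U" "\<And>a. a \<in> U \<Longrightarrow> prime_elem (p a)"
    and "\<And>a b. a \<in> U \<Longrightarrow> b \<in> U \<Longrightarrow> p a dvd p b \<Longrightarrow> a = b"
    and "S \<subseteq> U" "S' \<subseteq> U" "prod p S dvd prod p S'"
  shows "S \<subseteq> S'"
proof
  fix a assume a: "a \<in> S"
  have fin: "finite S" "finite S'" using assms(1,4,5) finite_subset by auto
  have "p a dvd prod p S'"
    using dvd_prodI[OF fin(1) a] assms(6) by (rule dvd_trans)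
  moreover have "prime_elem (p a)"
    using a assms(2,4) by blast
  ultimately obtain b where "b \<in> S'" "p a dvd p b"
    using prime_elem_dvd_prodE fin(2) by metis
  then show "a \<in> S'"
    using assms(3) a assms(4,5) by blast
qed

definition flip :: "nat \<Rightarrow> signs \<Rightarrow> signs" where
  "flip j = (\<lambda>(a, b, c, d). (a \<noteq> (j = 1), b \<noteq> (j = 2), c \<noteq> (j = 3), d \<noteq> (j = 4)))"

lemma flip_flip [simp]: "flip j (flip j e) = e"
  by (cases e) (auto simp: flip_def)

lemma flip_closed_eq_UNIV:
  assumes "e\<^sub>0 \<in> S" and closed: "\<And>j e. j \<in> {1..4} \<Longrightarrow> e \<in> S \<Longrightarrow> flip j e \<in> S"
  shows "S = UNIV"
proof -
  have any1: "(a', b, c, d) \<in> S" if "(a, b, c, d) \<in> S" for a b c d a'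
    using that closed[of 1 "(a, b, c, d)"] by (cases "a' = a") (auto simp: flip_def)
  have any2: "(a, b', c, d) \<in> S" if "(a, b, c, d) \<in> S" for a b c d b'
    using that closed[of 2 "(a, b, c, d)"] by (cases "b' = b") (auto simp: flip_def)
  have any3: "(a, b, c', d) \<in> S" if "(a, b, c, d) \<in> S" for a b c d c'
    using that closed[of 3 "(a, b, c, d)"] by (cases "c' = c") (auto simp: flip_def)
  have any4: "(a, b, c, d') \<in> S" if "(a, b, c, d) \<in> S" for a b c d d'
    using that closed[of 4 "(a, b, c, d)"] by (cases "d' = d") (auto simp: flip_def)
  obtain a\<^sub>0 b\<^sub>0 c\<^sub>0 d\<^sub>0 where e\<^sub>0: "(a\<^sub>0, b\<^sub>0, c\<^sub>0, d\<^sub>0) \<in> S"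
    using assms(1) by (cases e\<^sub>0) auto
  have "(a, b, c, d) \<in> S" for a b c d
    by (rule any4[OF any3[OF any2[OF any1[OF e\<^sub>0]]]])
  then show ?thesis by auto
qed

definition square_vars :: "'a::comm_ring_1 mpoly5 \<Rightarrow> 'a mpoly5" where
  "square_vars p = subst5 p (\<lambda>i. var5 i ^ 2)"

definition negate_var :: "nat \<Rightarrow> 'a::comm_ring_1 mpoly5 \<Rightarrow> 'a mpoly5" where
  "negate_var j p = subst5 p (\<lambda>i. if i = j then - var5 i else var5 i)"

lemma comm_ring_hom_square_vars: "comm_ring_hom square_vars"
  unfolding square_vars_def[abs_def] by (rule comm_ring_hom_subst5)

lemma comm_ring_hom_negate_var: "comm_ring_hom (negate_var j)"
  unfolding negate_var_def[abs_def] by (rule comm_ring_hom_subst5)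

lemma eval5_square_vars: "eval5 (square_vars p) x = eval5 p (\<lambda>i. x i ^ 2)"
  unfolding square_vars_def eval5_subst5 by (rule eval5_cong) simp

lemma eval5_negate_var: "eval5 (negate_var j p) x = eval5 p (\<lambda>i. if i = j then - x i else x i)"
  unfolding negate_var_def eval5_subst5 by (rule eval5_cong) simp

lemma negate_var_square_vars:
  fixes p :: "'a::{idom,ring_char_0} mpoly5"
  shows "negate_var j (square_vars p) = square_vars p"
  by (rule eval5_inject) (simp add: eval5_square_vars eval5_negate_var, rule eval5_cong, simp)

lemma is_unit_square_varsD:
  fixes p :: "complex mpoly5"
  assumes "is_unit (square_vars p)"
  shows "is_unit p"
proof -
  obtain c where c: "c dvd 1" "square_vars p = const5 c"
    using assms by (auto simp: is_unit_mpoly5_iff)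
  have "p = const5 c"
  proof (rule eval5_inject)
    fix y
    have "eval5 p y = eval5 (square_vars p) (\<lambda>i. csqrt (y i))"
      by (simp add: eval5_square_vars)
    then show "eval5 p y = eval5 (const5 c) y"
      using c by simp
  qed
  then show ?thesis
    using c(1) is_unit_mpoly5_iff by blast
qed

definition lin_form :: "signs \<Rightarrow> 'a::comm_ring_1 mpoly5" where
  "lin_form e = signed_sum e (prod_except var5)"

lemma eval5_lin_form [simp]: "eval5 (lin_form e) x = signed_sum e (prod_except x)"
  by (simp add: lin_form_def comm_ring_hom.hom_signed_sum[OF comm_ring_hom_eval5]
      eval5_prod_except_var5)

lemma square_vars_discriminant5:
  "square_vars (discriminant5 :: 'a::{idom,ring_char_0} mpoly5) = (\<Prod>e\<in>UNIV. lin_form e)"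
  by (rule eval5_inject)
    (simp add: eval5_square_vars eval5_discriminant5 prod_except_power prod_signed_sum_eq_signed_norm)

lemma prod_except_negate:
  fixes x :: "nat \<Rightarrow> 'a::comm_ring_1"
  assumes "i < 5" "j < 5"
  shows "prod_except (\<lambda>l. if l = j then - x l else x l) i =
    (if i = j then prod_except x i else - prod_except x i)"
proof (cases "i = j")
  case True
  then show ?thesis
    by (auto simp: prod_except_def intro: prod.cong)
next
  case False
  let ?A = "{0..4::nat} - {i}"
  have j: "j \<in> ?A" "finite ?A" using assms False by auto
  have "prod_except (\<lambda>l. if l = j then - x l else x l) i = - x j * (\<Prod>l\<in>?A - {j}. x l)"
    unfolding prod_except_def by (subst prod.remove[OF j(2) j(1)]) (auto intro!: prod.cong)
  also have "\<dots> = - (x j * (\<Prod>l\<in>?A - {j}. x l))"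
    by simp
  also have "x j * (\<Prod>l\<in>?A - {j}. x l) = prod_except x i"
    unfolding prod_except_def by (subst prod.remove[OF j(2) j(1)]) simp
  finally show ?thesis using False by simp
qed

lemma negate_var_lin_form:
  assumes "j \<in> {1..4}"
  shows "negate_var j (lin_form e :: 'a::{idom,ring_char_0} mpoly5) = - lin_form (flip j e)"
proof (rule eval5_inject)
  fix x :: "nat \<Rightarrow> 'a"
  from assms have "j = 1 \<or> j = 2 \<or> j = 3 \<or> j = 4" by auto
  then show "eval5 (negate_var j (lin_form e)) x = eval5 (- lin_form (flip j e)) x"
    by (elim disjE; cases e)
      (simp_all add: eval5_negate_var signed_sum_def flip_def prod_except_negate algebra_simps)
qed

lemma negate_var_prod_lin_form:
  assumes "j \<in> {1..4}"
  shows "negate_var j (\<Prod>e\<in>S. lin_form e :: 'a::{idom,ring_char_0} mpoly5) =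
    (-1) ^ card S * (\<Prod>e\<in>flip j ` S. lin_form e)"
proof -
  have "inj_on (flip j) S"
    by (metis flip_flip inj_onI)
  then show ?thesis
    by (simp add: comm_ring_hom.hom_prod[OF comm_ring_hom_negate_var] negate_var_lin_form[OF assms]
        prod_uminus prod.reindex)
qed

type_synonym 'a mpoly4 = "'a poly poly poly poly"

definition var4 :: "nat \<Rightarrow> 'a::comm_semiring_1 mpoly4" where
  "var4 i = (if i = 0 then [:[:[:[:0, 1:]:]:]:] else if i = 1 then [:[:[:0, 1:]:]:]
    else if i = 2 then [:[:0, 1:]:] else [:0, 1:])"

definition eval4 :: "'a::comm_ring_1 mpoly4 \<Rightarrow> (nat \<Rightarrow> 'a) \<Rightarrow> 'a" where
  "eval4 q x = eval5 [:q:] x"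

definition cofactor4 :: "nat \<Rightarrow> complex mpoly4" where
  "cofactor4 j = (\<Prod>i\<in>{0..3} - {j}. var4 i)"

text \<open>The coefficients of \<open>lin_form e\<close> as a polynomial in \<open>a\<^sub>4\<close>; note that
  \<open>cofactor4 4\<close> omits no variable.\<close>

definition lin_form_lead :: "signs \<Rightarrow> complex mpoly4" where
  "lin_form_lead e = signed_sum e (\<lambda>j. if j < 4 then cofactor4 j else 0)"

definition lin_form_const :: "signs \<Rightarrow> complex mpoly4" where
  "lin_form_const e = signed_sum e (\<lambda>j. if j = 4 then cofactor4 4 else 0)"

lemma comm_ring_hom_const_poly: "comm_ring_hom (\<lambda>c. [:c:])"
  by unfold_locales (simp_all add: pCons_one)

lemma comm_ring_hom_eval4: "comm_ring_hom (\<lambda>q. eval4 q x)"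
  unfolding eval4_def by (rule comm_ring_hom_comp[OF comm_ring_hom_eval5 comm_ring_hom_const_poly])

lemmas eval4_simps [simp] = comm_ring_hom.hom_simps[OF comm_ring_hom_eval4]

lemma eval4_var4: "i < 4 \<Longrightarrow> eval4 (var4 i) x = x i"
  by (auto simp: var4_def eval4_def eval5_def less_Suc_eq numeral_eq_Suc)

lemma eval4_cofactor4: "eval4 (cofactor4 j) x = (\<Prod>i\<in>{0..3} - {j}. x i)"
  unfolding cofactor4_def eval4_simps by (intro prod.cong) (auto simp: eval4_var4)

lemma eval5_pCons: "eval5 (pCons a p) x = eval4 a x + x 4 * eval5 p x"
  by (simp add: eval5_def eval4_def)

lemma eval4_lin_form_lead:
  "eval4 (lin_form_lead e) x = signed_sum e (\<lambda>j. if j < 4 then \<Prod>i\<in>{0..3} - {j}. x i else 0)"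
proof -
  have "(\<lambda>j::nat. eval4 (if j < 4 then cofactor4 j else 0) x) =
      (\<lambda>j. if j < 4 then \<Prod>i\<in>{0..3} - {j}. x i else 0)"
    by (simp add: fun_eq_iff eval4_cofactor4)
  then show ?thesis
    by (simp add: lin_form_lead_def comm_ring_hom.hom_signed_sum[OF comm_ring_hom_eval4])
qed

lemma eval4_lin_form_const:
  "eval4 (lin_form_const e) x = signed_sum e (\<lambda>j. if j = 4 then \<Prod>i\<in>{0..3}. x i else 0)"
proof -
  have "{0..3::nat} - {4} = {0..3}" by auto
  then have "(\<lambda>j::nat. eval4 (if j = 4 then cofactor4 4 else 0) x) =
      (\<lambda>j. if j = 4 then \<Prod>i\<in>{0..3}. x i else 0)"
    by (simp add: fun_eq_iff eval4_cofactor4)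
  then show ?thesis
    by (simp add: lin_form_const_def comm_ring_hom.hom_signed_sum[OF comm_ring_hom_eval4])
qed

lemma prod_except_split:
  fixes x :: "nat \<Rightarrow> 'a::comm_semiring_1"
  assumes "j \<le> 4"
  shows "prod_except x j = x 4 * (if j < 4 then \<Prod>i\<in>{0..3} - {j}. x i else 0)
    + (if j = 4 then \<Prod>i\<in>{0..3}. x i else 0)"
proof -
  have "{0..4::nat} - {j} = (if j < 4 then insert 4 ({0..3} - {j}) else {0..3})"
    using assms by auto
  then show ?thesis
    using assms by (simp add: prod_except_def)
qed

lemma lin_form_eq_pCons: "lin_form e = [:lin_form_const e, lin_form_lead e:]"
proof (rule eval5_inject)
  fix x :: "nat \<Rightarrow> complex"
  have "eval5 (lin_form e) x =
      signed_sum e (\<lambda>j. x 4 * (if j < 4 then \<Prod>i\<in>{0..3} - {j}. x i else 0)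
        + (if j = 4 then \<Prod>i\<in>{0..3}. x i else 0))"
    unfolding eval5_lin_form by (rule signed_sum_cong) (rule prod_except_split)
  then show "eval5 (lin_form e) x = eval5 [:lin_form_const e, lin_form_lead e:] x"
    by (simp add: signed_sum_linear eval5_pCons eval4_lin_form_lead eval4_lin_form_const)
qed

lemma prime_elem_X_poly:
  "prime_elem ([:0, 1:] :: 'a::{idom_divide,ring_gcd,factorial_semiring,semiring_Gcd,
      semiring_gcd_mult_normalize} poly)"
  by (rule prime_elem_linear_poly) simp_all

lemma prime_elem_var4: "prime_elem (var4 i :: complex mpoly4)"
  by (simp add: var4_def prime_elem_const_poly_iff prime_elem_X_poly)

lemma eval4_lin_form_lead_point:
  assumes "i < 4"
  shows "eval4 (lin_form_lead e) (\<lambda>l. if l = i then 0 else 1) \<noteq> 0"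
proof -
  have "(\<Prod>l\<in>{0..3} - {j}. if l = i then 0 else 1 :: complex) = (if j = i then 1 else 0)"
    if "j < 4" for j
    using assms that by (auto intro: prod_zero)
  then show ?thesis
    using assms by (cases e) (auto simp: eval4_lin_form_lead signed_sum_def less_Suc_eq numeral_eq_Suc)
qed

lemma prime_elem_lin_form: "prime_elem (lin_form e :: complex mpoly5)"
proof -
  have lead: "lin_form_lead e \<noteq> 0"
    using eval4_lin_form_lead_point[of 0 e] by auto
  have "\<not> var4 i dvd lin_form_lead e" if "i < 4" for i
  proof
    let ?pt = "\<lambda>l. if l = i then 0 else 1 :: complex"
    assume "var4 i dvd lin_form_lead e"
    then have "eval4 (var4 i) ?pt dvd eval4 (lin_form_lead e) ?pt"
      by (rule comm_ring_hom.hom_dvd[OF comm_ring_hom_eval4])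
    moreover have "eval4 (var4 i) ?pt = 0"
      using that by (simp add: eval4_var4)
    ultimately show False
      using eval4_lin_form_lead_point[OF that, of e] by simp
  qed
  then have "coprime (var4 i) (lin_form_lead e)" if "i \<in> {0..3}" for i
    using that by (intro prime_elem_imp_coprime prime_elem_var4) auto
  then have "coprime (cofactor4 4) (lin_form_lead e)"
    unfolding cofactor4_def by (intro prod_coprime_left) auto
  moreover obtain a b c d where "e = (a, b, c, d)"
    by (cases e)
  then have "lin_form_const e = sign_of d * cofactor4 4"
    by (simp add: lin_form_const_def signed_sum_def)
  ultimately have "coprime (lin_form_const e) (lin_form_lead e)"
    by (simp add: is_unit_sign_of is_unit_left_imp_coprime)
  then show ?thesis
    unfolding lin_form_eq_pCons by (intro prime_elem_linear_poly lead)
qed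

lemma lin_form_dvd_imp_eq:
  assumes "(lin_form e :: complex mpoly5) dvd lin_form e'"
  shows "e = e'"
proof -
  obtain q :: "complex mpoly5" where q: "lin_form e' = lin_form e * q"
    using assms by blast
  have "is_unit q"
    using q prime_elem_lin_form[of e'] prime_elem_lin_form[of e]
    by (metis prime_elem_imp_irreducible irreducibleD prime_elem_not_unit)
  then obtain c where c: "q = const5 c"
    by (auto simp: is_unit_mpoly5_iff)
  have ev: "signed_sum e' (prod_except x) = signed_sum e (prod_except x) * c" for x
    using arg_cong[OF q, of "\<lambda>p. eval5 p x"] c by simp
  let ?pt = "\<lambda>i l. if l = i then 0 else (1::complex)"
  obtain a b c' d where e: "e = (a, b, c', d)" by (cases e)
  obtain a' b' c'' d' where e': "e' = (a', b', c'', d')" by (cases e')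
  have "c = 1"
    using ev[of "?pt 0"] by (simp add: e e' signed_sum_def prod_except_point)
  then show ?thesis
    using ev[of "?pt 1"] ev[of "?pt 2"] ev[of "?pt 3"] ev[of "?pt 4"]
    by (simp add: e e' signed_sum_def prod_except_point sign_of_inject)
qed

lemma square_vars_dvd_cases:
  fixes F :: "complex mpoly5"
  assumes "F dvd discriminant5"
  shows "is_unit (square_vars F) \<or> square_vars discriminant5 dvd square_vars F"
proof -
  have "square_vars F dvd prod lin_form UNIV"
    using comm_ring_hom.hom_dvd[OF comm_ring_hom_square_vars assms]
    by (simp add: square_vars_discriminant5)
  then obtain S where S: "square_vars F dvd prod lin_form S" "prod lin_form S dvd square_vars F"
    by (rule dvd_prod_prime_elemsE[OF finite_UNIV prime_elem_lin_form])
  have closed: "flip j e \<in> S" if j: "j \<in> {1..4}" and e: "e \<in> S" for j e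
  proof -
    have "negate_var j (prod lin_form S) dvd negate_var j (square_vars F)"
      by (rule comm_ring_hom.hom_dvd[OF comm_ring_hom_negate_var S(2)])
    then have "(-1) ^ card S * prod lin_form (flip j ` S) dvd square_vars F"
      by (simp only: negate_var_prod_lin_form[OF j] negate_var_square_vars)
    then have "prod lin_form (flip j ` S) dvd square_vars F"
      by (rule dvd_mult_right)
    then have dvd: "prod lin_form (flip j ` S) dvd (prod lin_form S :: complex mpoly5)"
      using S(1) by (rule dvd_trans)
    have inj: "a = b" if "a \<in> UNIV" "b \<in> UNIV" "(lin_form a :: complex mpoly5) dvd lin_form b"
      for a b
      using that(3) by (rule lin_form_dvd_imp_eq)
    have "flip j ` S \<subseteq> S"
      by (rule prod_prime_elems_dvd_imp_subset[OF finite_UNIV prime_elem_lin_form inj subset_UNIV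
            subset_UNIV dvd])
    then show ?thesis using e by blast
  qed
  show ?thesis
  proof (cases "S = {}")
    case True
    then show ?thesis using S(1) by simp
  next
    case False
    then obtain e where "e \<in> S" by blast
    then have "S = UNIV" using closed by (rule flip_closed_eq_UNIV)
    then show ?thesis using S(2) by (simp add: square_vars_discriminant5)
  qed
qed

theorem irreducible_discriminant5: "irreducible (discriminant5 :: complex mpoly5)"
proof (rule irreducibleI)
  show "(discriminant5 :: complex mpoly5) \<noteq> 0"
    by (rule discriminant5_nonzero)
  show "\<not> is_unit (discriminant5 :: complex mpoly5)"
  proof
    assume "is_unit (discriminant5 :: complex mpoly5)"
    then obtain c :: complex where c: "c dvd 1" "discriminant5 = const5 c"
      by (auto simp: is_unit_mpoly5_iff)
    have "c = eval5 (discriminant5 :: complex mpoly5) (\<lambda>_. 0)"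
      by (subst c(2)) simp
    with c(1) show False
      by (simp add: eval5_discriminant5_zeros)
  qed
  fix F G :: "complex mpoly5"
  assume FG: "discriminant5 = F * G"
  have square_FG: "square_vars discriminant5 = square_vars F * square_vars G"
    by (simp add: FG comm_ring_hom.hom_mult[OF comm_ring_hom_square_vars])
  have "eval5 (square_vars discriminant5) (\<lambda>_. 1) \<noteq> (0 :: complex)"
    using eval5_discriminant5_ones[where 'a = complex] by (simp add: eval5_square_vars)
  then have nonzero: "square_vars (discriminant5 :: complex mpoly5) \<noteq> 0"
    by auto
  show "is_unit F \<or> is_unit G"
  proof (cases "is_unit (square_vars F)")
    case True
    then show ?thesis using is_unit_square_varsD by blast
  next
    case False
    have "F dvd discriminant5"
      using FG by (rule dvdI)
    then have "square_vars discriminant5 dvd square_vars F"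
      using square_vars_dvd_cases False by blast
    then have "square_vars F * square_vars G dvd square_vars F * 1"
      by (simp only: square_FG mult_1_right)
    moreover have "square_vars F \<noteq> 0"
      using nonzero square_FG by auto
    ultimately have "is_unit (square_vars G)"
      by simp
    then show ?thesis using is_unit_square_varsD by blast
  qed
qed

theorem mainTheorem1:
  shows "\<exists>D :: rat mpoly5.
     (\<forall>s :: nat \<Rightarrow> complex. eval5 (map5 of_rat D) (\<lambda>i. (s i)^2) = Delta_sqrt s)
   \<and> (\<forall>\<sigma> k. \<sigma> permutes {..<5::nat} \<longrightarrow> coeff5 D (k \<circ> \<sigma>) = coeff5 D k)
   \<and> D \<noteq> 0
   \<and> (\<forall>k. coeff5 D k \<noteq> 0 \<longrightarrow> (\<Sum>i<5. k i) = 32)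
   \<and> irreducible (map5 (of_rat :: rat \<Rightarrow> complex) D)"
proof (intro exI[of _ discriminant5] conjI allI impI)
  show "eval5 (map5 of_rat discriminant5) (\<lambda>i. (s i)^2) = Delta_sqrt s" for s
    by (simp add: map5_discriminant5 comm_ring_hom_of_rat eval5_discriminant5_squares)
  show "coeff5 (discriminant5 :: rat mpoly5) (k \<circ> \<sigma>) = coeff5 discriminant5 k"
    if "\<sigma> permutes {..<5}" for \<sigma> k
    using that eval5_discriminant5_permute[OF that] by (rule coeff5_permute_eq)
  show "(discriminant5 :: rat mpoly5) \<noteq> 0"
    by (rule discriminant5_nonzero)
  show "(\<Sum>i<5. k i) = 32" if "coeff5 (discriminant5 :: rat mpoly5) k \<noteq> 0" for k
    by (rule coeff5_nonzero_imp_total_degree[OF _ that]) (simp add: eval5_discriminant5_scale)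
  show "irreducible (map5 (of_rat :: rat \<Rightarrow> complex) discriminant5)"
    by (simp add: map5_discriminant5 comm_ring_hom_of_rat irreducible_discriminant5)
qed

end
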